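(* With $\tau=\frac{1}{4(n-1)}\left(u_2-\frac{n-2}{2(n-1)}u_1^2\right)$, $e=\frac{\partial}{\partial u_{n-1}}$, and $E^i:=\sum_j g^{ij}\frac{\partial\tau}{\partial u_j}$, one has $E^i=\sum_{l,j}g^{il}\eta_{lj}e^j$ for all $i$.
   Context: $n\ge2$. $u_k=\sum_{1\le i_1<\dots<i_k\le n}p_{i_1}^2\cdots p_{i_k}^2$ ($k=1,\dots,n$), $u_0=1$, $u_k=0$ for $k<0$ or $k>n$, coordinates on $\mathbb{C}^n/B_n$. $g^{ij}(u)=\sum_{k,l}\frac{1-\delta^{kl}}{p_kp_l}\frac{\partial u_i}{\partial p_k}\frac{\partial u_j}{\partial p_l}$, $\eta^{ij}(u)=\frac{\partial g^{ij}}{\partial u_{n-1}}(u)=4(2n-i-j)u_{i+j-n-1}$ (nondegenerate), and $\eta_{ij}$ denotes the inverse matrix of $\eta^{ij}$. *)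

theory Defs
  imports "HOL-Analysis.Analysis"
begin

text \<open>Points p of C^n are functions nat => complex, only the values p 1, ..., p n matter.\<close>

definition uu :: "nat \<Rightarrow> nat \<Rightarrow> (nat \<Rightarrow> complex) \<Rightarrow> complex" where
  "uu n k p = (\<Sum>S\<in>{S. S \<subseteq> {1..n} \<and> card S = k}. \<Prod>i\<in>S. (p i)^2)"

text \<open>u_k for integer k, with u_k = 0 for k < 0 (and automatically u_0 = 1, u_k = 0 for k > n).\<close>
definition uZ :: "nat \<Rightarrow> int \<Rightarrow> (nat \<Rightarrow> complex) \<Rightarrow> complex" where
  "uZ n k p = (if k < 0 then 0 else uu n (nat k) p)"

definition du :: "nat \<Rightarrow> nat \<Rightarrow> nat \<Rightarrow> (nat \<Rightarrow> complex) \<Rightarrow> complex" where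
  "du n i k p = deriv (\<lambda>t. uu n i (p(k := t))) (p k)"

definition gup :: "nat \<Rightarrow> nat \<Rightarrow> nat \<Rightarrow> (nat \<Rightarrow> complex) \<Rightarrow> complex" where
  "gup n i j p = (\<Sum>k\<in>{1..n}. \<Sum>l\<in>{1..n}.
      (if k = l then 0 else 1) / (p k * p l) * du n i k p * du n j l p)"

definition etaup :: "nat \<Rightarrow> nat \<Rightarrow> nat \<Rightarrow> (nat \<Rightarrow> complex) \<Rightarrow> complex" where
  "etaup n i j p = 4 * of_int (2 * int n - int i - int j) * uZ n (int i + int j - int n - 1) p"

definition etalow :: "nat \<Rightarrow> (nat \<Rightarrow> complex) \<Rightarrow> nat \<Rightarrow> nat \<Rightarrow> complex" where
  "etalow n p = (THE M. (\<forall>i j. (i \<notin> {1..n} \<or> j \<notin> {1..n}) \<longrightarrow> M i j = 0) \<and>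
       (\<forall>i\<in>{1..n}. \<forall>j\<in>{1..n}. (\<Sum>l\<in>{1..n}. etaup n i l p * M l j) = (if i = j then 1 else 0)))"

definition tau :: "nat \<Rightarrow> (nat \<Rightarrow> complex) \<Rightarrow> complex" where
  "tau n U = 1 / (4 * (of_nat n - 1)) *
     (U 2 - (of_nat n - 2) / (2 * (of_nat n - 1)) * (U 1)^2)"

definition dtau :: "nat \<Rightarrow> nat \<Rightarrow> (nat \<Rightarrow> complex) \<Rightarrow> complex" where
  "dtau n j p = (let U = (\<lambda>k. uu n k p) in deriv (\<lambda>t. tau n (U(j := t))) (U j))"

definition evec :: "nat \<Rightarrow> nat \<Rightarrow> complex" where
  "evec n j = (if j = n - 1 then 1 else 0)"

definition EE :: "nat \<Rightarrow> nat \<Rightarrow> (nat \<Rightarrow> complex) \<Rightarrow> complex" where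
  "EE n i p = (\<Sum>j\<in>{1..n}. gup n i j p * dtau n j p)"

end

theory Submission imports Defs begin

text \<open>The matrix \<open>\<eta>\<^sup>i\<^sup>j = 4(2n-i-j) u\<^sub>i\<^sub>+\<^sub>j\<^sub>-\<^sub>n\<^sub>-\<^sub>1\<close> vanishes above the
  anti-diagonal \<open>i + j = n + 1\<close> and equals \<open>4(n-1) u\<^sub>0 = 4(n-1)\<close> on it, so it is invertible
  by back-substitution.  Since \<open>\<tau>\<close> only involves \<open>u\<^sub>1\<close> and \<open>u\<^sub>2\<close>, the vector \<open>d\<tau>\<close> has two
  nonzero entries, and a direct computation with the first two columns of \<open>\<eta>\<close> gives
  \<open>\<Sum>\<^sub>l \<eta>\<^sup>i\<^sup>l \<partial>\<tau>/\<partial>u\<^sub>l = \<delta>\<^sup>i\<^sub>n\<^sub>-\<^sub>1\<close>.  Hence \<open>\<partial>\<tau>/\<partial>u\<^sub>l = \<eta>\<^sub>l\<^sub>,\<^sub>n\<^sub>-\<^sub>1 = \<Sum>\<^sub>j \<eta>\<^sub>l\<^sub>j e\<^sup>j\<close>, and contracting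
  with \<open>g\<^sup>i\<^sup>l\<close> gives the claim.\<close>

lemma upper_triangular_solvable:
  fixes A :: "nat \<Rightarrow> nat \<Rightarrow> 'a::field"
  assumes "\<And>i l. i < m \<Longrightarrow> l < i \<Longrightarrow> A i l = 0"
    and "\<And>i. i < m \<Longrightarrow> A i i \<noteq> 0"
  shows "\<exists>x. \<forall>i<m. (\<Sum>l<m. A i l * x l) = b i"
  using assms
proof (induction m arbitrary: b)
  case 0
  then show ?case by simp
next
  case (Suc m)
  define xm where "xm = b m / A m m"
  obtain x where x: "\<forall>i<m. (\<Sum>l<m. A i l * x l) = b i - A i m * xm"
    using Suc.IH[of "\<lambda>i. b i - A i m * xm"] Suc.prems by auto
  have last_row: "(\<Sum>l<m. A m l * x l) = 0"
    using Suc.prems(1) by simp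
  have "(\<Sum>l<Suc m. A i l * (x(m := xm)) l) = b i" if "i < Suc m" for i
    using that x last_row Suc.prems(2)[of m] by (cases "i = m") (auto simp: xm_def)
  then show ?case by blast
qed

lemma upper_triangular_injective:
  fixes A :: "nat \<Rightarrow> nat \<Rightarrow> 'a::field"
  assumes "\<And>i l. i < m \<Longrightarrow> l < i \<Longrightarrow> A i l = 0"
    and "\<And>i. i < m \<Longrightarrow> A i i \<noteq> 0"
    and "\<forall>i<m. (\<Sum>l<m. A i l * x l) = 0"
  shows "\<forall>l<m. x l = 0"
  using assms
proof (induction m)
  case 0
  then show ?case by simp
next
  case (Suc m)
  have "(\<Sum>l<m. A m l * x l) = 0"
    using Suc.prems(1) by simp
  with Suc.prems(3) have "A m m * x m = 0"
    by (auto dest: spec[of _ m])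
  then have xm: "x m = 0"
    using Suc.prems(2) by simp
  have "\<forall>i<m. (\<Sum>l<m. A i l * x l) = 0"
    using Suc.prems(3) xm by auto
  then have "\<forall>l<m. x l = 0"
    using Suc.IH Suc.prems(1,2) by simp
  with xm show ?case
    using less_Suc_eq by blast
qed

lemma the_inverse_column:
  fixes A :: "'b \<Rightarrow> 'b \<Rightarrow> 'a::field" and I :: "'b set"
  assumes injective: "\<And>x. \<forall>i\<in>I. (\<Sum>l\<in>I. A i l * x l) = 0 \<Longrightarrow> \<forall>l\<in>I. x l = 0"
    and solvable: "\<And>b. \<exists>x. \<forall>i\<in>I. (\<Sum>l\<in>I. A i l * x l) = b i"
    and j: "j \<in> I"
    and y: "\<forall>i\<in>I. (\<Sum>l\<in>I. A i l * y l) = (if i = j then 1 else 0)"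
    and l: "l \<in> I"
  shows "(THE M. (\<forall>i j. (i \<notin> I \<or> j \<notin> I) \<longrightarrow> M i j = 0) \<and>
            (\<forall>i\<in>I. \<forall>j\<in>I. (\<Sum>l\<in>I. A i l * M l j) = (if i = j then 1 else 0))) l j = y l"
    (is "The ?inverse l j = _")
proof -
  have unique: "\<forall>l\<in>I. x l = x' l"
    if "\<forall>i\<in>I. (\<Sum>l\<in>I. A i l * x l) = b i" "\<forall>i\<in>I. (\<Sum>l\<in>I. A i l * x' l) = b i"
    for x x' :: "'b \<Rightarrow> 'a" and b
  proof -
    have "\<forall>i\<in>I. (\<Sum>l\<in>I. A i l * (x l - x' l)) = 0"
      using that by (simp add: right_diff_distrib sum_subtractf)
    from injective[OF this] show ?thesis
      by simp
  qed
  have "\<forall>k. \<exists>x. \<forall>i\<in>I. (\<Sum>l\<in>I. A i l * x l) = (if i = k then 1 else 0)"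
    using solvable by simp
  then obtain X where X: "\<forall>k. \<forall>i\<in>I. (\<Sum>l\<in>I. A i l * X k l) = (if i = k then 1 else 0)"
    by (rule choice[THEN exE])
  define M where "M = (\<lambda>l k. if l \<in> I \<and> k \<in> I then X k l else 0)"
  have "?inverse M"
  proof (intro conjI allI impI ballI)
    fix i k assume "i \<in> I" "k \<in> I"
    then have "(\<Sum>l\<in>I. A i l * M l k) = (\<Sum>l\<in>I. A i l * X k l)"
      by (intro sum.cong) (auto simp: M_def)
    with X \<open>i \<in> I\<close> show "(\<Sum>l\<in>I. A i l * M l k) = (if i = k then 1 else 0)"
      by simp
  qed (auto simp: M_def)
  moreover have "M' = M" if M': "?inverse M'" for M'
  proof (intro ext)
    fix l k
    show "M' l k = M l k"
    proof (cases "l \<in> I \<and> k \<in> I")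
      case True
      then have "\<forall>i\<in>I. (\<Sum>l\<in>I. A i l * M' l k) = (if i = k then 1 else 0)"
        and "\<forall>i\<in>I. (\<Sum>l\<in>I. A i l * M l k) = (if i = k then 1 else 0)"
        using M' \<open>?inverse M\<close> by blast+
      from unique[OF this] True show ?thesis
        by blast
    next
      case False
      with M' \<open>?inverse M\<close> have "M' l k = 0" "M l k = 0"
        by blast+
      then show ?thesis
        by simp
    qed
  qed
  ultimately have "?inverse (The ?inverse)"
    by (rule theI)
  with j have "\<forall>i\<in>I. (\<Sum>l\<in>I. A i l * The ?inverse l j) = (if i = j then 1 else 0)"
    by blast
  from unique[OF this y] l show ?thesis
    by blast
qed

lemma uu_0: "uu n 0 p = 1"
proof -
  have "{S. S \<subseteq> {1..n} \<and> card S = 0} = {{}}"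
    using finite_subset by fastforce
  then show ?thesis
    by (simp add: uu_def)
qed

lemma etaup_above_antidiagonal: "i + j \<le> n \<Longrightarrow> etaup n i j p = 0"
  by (simp add: etaup_def uZ_def)

lemma etaup_antidiagonal:
  assumes "i + j = Suc n"
  shows "etaup n i j p = 4 * (of_nat n - 1)"
proof -
  have "2 * int n - int i - int j = int n - 1" and "int i + int j - int n - 1 = 0"
    using assms by linarith+
  then show ?thesis
    by (simp only: etaup_def) (simp add: uZ_def uu_0)
qed

lemma sum_atLeast1_atMost_shift: "(\<Sum>l\<in>{1..n}. f l) = (\<Sum>l<n. f (Suc l))"
  by (simp add: sum.atLeast1_atMost_eq)

lemma etaup_n_2: "etaup n n 2 p = 4 * (of_nat n - 2) * uu n 1 p"
  by (simp add: etaup_def uZ_def)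

text \<open>Reversing the rows turns \<open>\<eta>\<close> into an upper triangular matrix with diagonal \<open>4(n-1)\<close>.\<close>

lemma etaup_reversed_upper_triangular:
  assumes "i < n" "l < i"
  shows "etaup n (n - i) (Suc l) p = 0"
  using assms by (intro etaup_above_antidiagonal) simp

lemma etaup_reversed_diagonal_nonzero:
  assumes "n \<ge> 2" "i < n"
  shows "etaup n (n - i) (Suc i) p \<noteq> 0"
proof -
  have "(of_nat n - 1 :: complex) = of_nat (n - 1)"
    using assms(1) by (simp add: of_nat_diff)
  then show ?thesis
    using assms by (simp add: etaup_antidiagonal)
qed

lemma etaup_injective:
  assumes "n \<ge> 2" and "\<forall>i\<in>{1..n}. (\<Sum>l\<in>{1..n}. etaup n i l p * x l) = 0"
  shows "\<forall>l\<in>{1..n}. x l = 0"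
proof -
  have reversed: "\<forall>i<n. (\<Sum>l<n. etaup n (n - i) (Suc l) p * x (Suc l)) = 0"
  proof (intro allI impI)
    fix i assume "i < n"
    then have "n - i \<in> {1..n}"
      by auto
    with assms(2) show "(\<Sum>l<n. etaup n (n - i) (Suc l) p * x (Suc l)) = 0"
      unfolding sum_atLeast1_atMost_shift by blast
  qed
  have "\<forall>l<n. x (Suc l) = 0"
    by (rule upper_triangular_injective[of n "\<lambda>i l. etaup n (n - i) (Suc l) p" "\<lambda>l. x (Suc l)",
          OF _ _ reversed])
      (fact etaup_reversed_upper_triangular, fact etaup_reversed_diagonal_nonzero[OF assms(1)])
  show ?thesis
  proof
    fix l assume "l \<in> {1..n}"
    then obtain k where "l = Suc k" and "k < n"
      by (cases l) auto
    with \<open>\<forall>l<n. x (Suc l) = 0\<close> show "x l = 0"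
      by simp
  qed
qed

lemma etaup_solvable:
  assumes "n \<ge> 2"
  shows "\<exists>x. \<forall>i\<in>{1..n}. (\<Sum>l\<in>{1..n}. etaup n i l p * x l) = b i"
proof -
  have "\<exists>y. \<forall>i<n. (\<Sum>l<n. etaup n (n - i) (Suc l) p * y l) = b (n - i)"
    by (rule upper_triangular_solvable)
      (fact etaup_reversed_upper_triangular, fact etaup_reversed_diagonal_nonzero[OF assms])
  then obtain y where y: "\<forall>i<n. (\<Sum>l<n. etaup n (n - i) (Suc l) p * y l) = b (n - i)"
    by blast
  show ?thesis
  proof (intro exI[of _ "\<lambda>l. y (l - 1)"] ballI)
    fix i assume "i \<in> {1..n}"
    then have "n - i < n" and "n - (n - i) = i"
      by auto
    with y have "(\<Sum>l<n. etaup n i (Suc l) p * y l) = b i"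
      by metis
    then show "(\<Sum>l\<in>{1..n}. etaup n i l p * y (l - 1)) = b i"
      unfolding sum_atLeast1_atMost_shift by simp
  qed
qed

lemma dtau_1: "dtau n 1 p = - (of_nat n - 2) * uu n 1 p / (4 * (of_nat n - 1)\<^sup>2)"
proof -
  let ?c = "1 / (4 * (of_nat n - 1)) :: complex" and ?d = "(of_nat n - 2) / (2 * (of_nat n - 1)) :: complex"
  have quadratic: "((\<lambda>t. c * (a - d * t\<^sup>2)) has_field_derivative c * - (d * (2 * x))) (at x)"
    for a c d x :: complex
    by (auto intro!: derivative_eq_intros)
  have "(\<lambda>t. tau n ((\<lambda>k. uu n k p)(1 := t))) = (\<lambda>t. ?c * (uu n 2 p - ?d * t\<^sup>2))"
    by (simp add: tau_def)
  then have "dtau n 1 p = ?c * - (?d * (2 * uu n 1 p))"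
    unfolding dtau_def Let_def using quadratic by (metis DERIV_imp_deriv fun_upd_same)
  also have "\<dots> = - (of_nat n - 2) * uu n 1 p / (4 * (of_nat n - 1)\<^sup>2)"
  proof -
    have "1 / (4 * m) * - (c / (2 * m) * (2 * u)) = - c * u / (4 * m\<^sup>2)" for m c u :: complex
      by (cases "m = 0") (simp_all add: field_simps power2_eq_square)
    then show ?thesis .
  qed
  finally show ?thesis .
qed

lemma dtau_2: "dtau n 2 p = 1 / (4 * (of_nat n - 1))"
proof -
  let ?c = "1 / (4 * (of_nat n - 1)) :: complex" and ?d = "(of_nat n - 2) / (2 * (of_nat n - 1)) :: complex"
  have affine: "((\<lambda>t. c * (t - a)) has_field_derivative c) (at x)" for a c x :: complex
    by (auto intro!: derivative_eq_intros)
  have "(\<lambda>t. tau n ((\<lambda>k. uu n k p)(2 := t))) = (\<lambda>t. ?c * (t - ?d * (uu n 1 p)\<^sup>2))"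
    by (simp add: tau_def)
  then show ?thesis
    unfolding dtau_def Let_def using affine by (metis DERIV_imp_deriv)
qed

lemma dtau_other: "j \<noteq> 1 \<Longrightarrow> j \<noteq> 2 \<Longrightarrow> dtau n j p = 0"
  by (simp add: dtau_def tau_def)

lemma etaup_dtau:
  assumes n: "n \<ge> 2" and i: "i \<in> {1..n}"
  shows "(\<Sum>l\<in>{1..n}. etaup n i l p * dtau n l p) = (if i = n - 1 then 1 else 0)"
proof -
  have nonzero: "(of_nat n - 1 :: complex) \<noteq> 0"
    using n by simp
  have "{1..n} = {1, 2} \<union> {3..n}"
    using n by auto
  then have "(\<Sum>l\<in>{1..n}. etaup n i l p * dtau n l p)
      = etaup n i 1 p * dtau n 1 p + etaup n i 2 p * dtau n 2 p"
    by (simp add: sum.union_disjoint dtau_other)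
  also have "\<dots> = (if i = n - 1 then 1 else 0)"
  proof -
    consider "i = n" | "i = n - 1" | "i + 2 \<le> n"
      using i by fastforce
    then show ?thesis
    proof cases
      case 1
      have e1: "etaup n n 1 p = 4 * (of_nat n - 1)"
        by (rule etaup_antidiagonal) simp
      have cancel: "4 * m * (- c * u / (4 * m\<^sup>2)) + 4 * c * u * (1 / (4 * m)) = 0"
        if "m \<noteq> 0" for m c u :: complex
        using that by (simp add: field_simps power2_eq_square)
      have "4 * (of_nat n - 1) * dtau n 1 p + 4 * (of_nat n - 2) * uu n 1 p * dtau n 2 p = 0"
        unfolding dtau_1 dtau_2 using nonzero by (rule cancel)
      moreover have "n \<noteq> n - 1"
        using n by simp
      ultimately show ?thesis
        unfolding 1 e1 etaup_n_2 by simp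
    next
      case 2
      have "etaup n (n - 1) 1 p = 0"
        using n by (intro etaup_above_antidiagonal) simp
      moreover have "etaup n (n - 1) 2 p = 4 * (of_nat n - 1)"
        using n by (intro etaup_antidiagonal) simp
      ultimately show ?thesis
        unfolding 2 dtau_2 using nonzero by simp
    next
      case 3
      then show ?thesis
        by (simp add: etaup_above_antidiagonal)
    qed
  qed
  finally show ?thesis .
qed

lemma etalow_column_dtau:
  assumes "n \<ge> 2" "l \<in> {1..n}"
  shows "etalow n p l (n - 1) = dtau n l p"
  unfolding etalow_def
proof (rule the_inverse_column[where A = "\<lambda>i l. etaup n i l p"])
  show "n - 1 \<in> {1..n}"
    using assms(1) by auto
qed (use assms etaup_injective etaup_solvable etaup_dtau in auto)

lemma sum_mult_evec:
  assumes "n \<ge> 2"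
  shows "(\<Sum>j\<in>{1..n}. f j * evec n j) = f (n - 1)"
proof -
  have "(\<Sum>j\<in>{1..n}. f j * evec n j) = (\<Sum>j\<in>{1..n}. if j = n - 1 then f j else 0)"
    by (intro sum.cong) (simp_all add: evec_def)
  also have "\<dots> = f (n - 1)"
    using assms by (simp add: sum.delta)
  finally show ?thesis .
qed

theorem mainTheorem16:
  fixes n :: nat and p :: "nat \<Rightarrow> complex"
  assumes "n \<ge> 2"
    and "\<forall>k\<in>{1..n}. p k \<noteq> 0"
  shows "\<forall>i\<in>{1..n}. EE n i p =
           (\<Sum>l\<in>{1..n}. \<Sum>j\<in>{1..n}. gup n i l p * etalow n p l j * evec n j)"
proof
  fix i
  have "(\<Sum>j\<in>{1..n}. gup n i l p * etalow n p l j * evec n j) = gup n i l p * dtau n l p"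
    if "l \<in> {1..n}" for l
    using sum_mult_evec[OF assms(1)] etalow_column_dtau[OF assms(1) that] by simp
  then show "EE n i p = (\<Sum>l\<in>{1..n}. \<Sum>j\<in>{1..n}. gup n i l p * etalow n p l j * evec n j)"
    by (simp add: EE_def)
qed

end
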